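(* Let $n\geq 2$ and let $\nu,\tilde\nu$ be real numbers with $\nu^2+\tilde\nu^2>0$. Then for any $z_0$, the h-sphere $S^{2n}\!\left(z_0;\dfrac{\nu}{\nu^2+\tilde\nu^2},\dfrac{-\tilde\nu}{\nu^2+\tilde\nu^2}\right)$ in $(\mathbb{R}^{2n+2},g,J)$ has constant totally real sectional curvatures $\nu$ and $\tilde\nu$.
   Context: On $\mathbb{R}^{2n+2}$ with points $Z=(x^1,\dots,x^{n+1};y^1,\dots,y^{n+1})$, let $J(x;y)=(y;-x)$, $g(Z,W)=\sum_k x_Z^kx_W^k-\sum_k y_Z^ky_W^k$, $\tilde g(Z,W)=g(JZ,W)$; this is a flat Kähler manifold with Norden metric. For $z_0$ with position vector $Z_0$ and $(a,b)\neq(0,0)$, the h-sphere is $S^{2n}(z_0;a,b)=\{Z: g(Z-Z_0,Z-Z_0)=a,\ \tilde g(Z-Z_0,Z-Z_0)=b\}$, a $2n$-dimensional submanifold with $J$-invariant tangent spaces on which $g$ is nondegenerate; it carries the induced metric and its Levi-Civita connection $\nabla$. Curvature: $R(X,Y)Z=\nabla_X\nabla_YZ-\nabla_Y\nabla_XZ-\nabla_{[X,Y]}Z$, $R(x,y,z,u)=g(R(x,y)z,u)$, $\tilde R(x,y,z,u)=R(x,y,z,Ju)$, $\pi_1(x,y,z,u)=g(y,z)g(x,u)-g(x,z)g(y,u)$; for a $g$-nondegenerate 2-plane $\beta$ with basis $x,y$, $K(\beta;p)=R(x,y,y,x)/\pi_1(x,y,y,x)$, $\tilde K(\beta;p)=\tilde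 R(x,y,y,x)/\pi_1(x,y,y,x)$; $\beta$ is totally real if $\beta\neq J\beta$, $\beta\perp_gJ\beta$. Constant totally real sectional curvatures $\nu,\tilde\nu$ means $K(\beta;p)=\nu$, $\tilde K(\beta;p)=\tilde\nu$ for all $p$ and all nondegenerate totally real $\beta\subset T_p$. *)

theory Defs
  imports "HOL-Analysis.Analysis"
begin

text \<open>Points of R^(2n+2) are pairs (x;y) with x, y in R^(n+1); here R^(n+1) = real^'m.\<close>

type_synonym 'm pt = "(real^'m) \<times> (real^'m)"

definition Jop :: "'m::finite pt \<Rightarrow> 'm pt" where
  "Jop Z = (snd Z, - fst Z)"

definition gN :: "'m::finite pt \<Rightarrow> 'm pt \<Rightarrow> real" where
  "gN Z W = fst Z \<bullet> fst W - snd Z \<bullet> snd W"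

definition gT :: "'m::finite pt \<Rightarrow> 'm pt \<Rightarrow> real" where
  "gT Z W = gN (Jop Z) W"

definition hsphere :: "'m::finite pt \<Rightarrow> real \<Rightarrow> real \<Rightarrow> 'm pt set" where
  "hsphere Z0 a b = {Z. gN (Z - Z0) (Z - Z0) = a \<and> gT (Z - Z0) (Z - Z0) = b}"

definition tangent_space :: "'m::finite pt set \<Rightarrow> 'm pt \<Rightarrow> 'm pt set" where
  "tangent_space S p = {v. \<exists>\<gamma> e. e > 0 \<and> \<gamma> 0 = p \<and> (\<forall>t\<in>{-e<..<e}. \<gamma> t \<in> S)
                         \<and> (\<gamma> has_vector_derivative v) (at 0)}"

definition tanproj :: "'m::finite pt set \<Rightarrow> 'm pt \<Rightarrow> 'm pt \<Rightarrow> 'm pt" where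
  "tanproj S p w = (THE t. t \<in> tangent_space S p \<and>
                      (\<forall>u\<in>tangent_space S p. gN (w - t) u = 0))"

text \<open>Induced (Levi-Civita) connection of the submanifold: tangential part of the
  ambient flat derivative (Gauss formula).\<close>
definition cov :: "'m::finite pt set \<Rightarrow> ('m pt \<Rightarrow> 'm pt) \<Rightarrow> ('m pt \<Rightarrow> 'm pt) \<Rightarrow> 'm pt \<Rightarrow> 'm pt" where
  "cov S X W p = tanproj S p (frechet_derivative W (at p within S) (X p))"

definition lie :: "'m::finite pt set \<Rightarrow> ('m pt \<Rightarrow> 'm pt) \<Rightarrow> ('m pt \<Rightarrow> 'm pt) \<Rightarrow> 'm pt \<Rightarrow> 'm pt" where
  "lie S X Y p = frechet_derivative Y (at p within S) (X p) - frechet_derivative X (at p within S) (Y p)"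

definition curv :: "'m::finite pt set \<Rightarrow> ('m pt \<Rightarrow> 'm pt) \<Rightarrow> ('m pt \<Rightarrow> 'm pt) \<Rightarrow> ('m pt \<Rightarrow> 'm pt) \<Rightarrow> 'm pt \<Rightarrow> 'm pt" where
  "curv S X Y Z p = cov S X (cov S Y Z) p - cov S Y (cov S X Z) p - cov S (lie S X Y) Z p"

definition C2field :: "('m::finite pt \<Rightarrow> 'm pt) \<Rightarrow> bool" where
  "C2field X \<longleftrightarrow> (\<forall>q. X differentiable (at q)) \<and>
      (\<forall>v q. (\<lambda>r. frechet_derivative X (at r) v) differentiable (at q))"

definition tfield :: "'m::finite pt set \<Rightarrow> ('m pt \<Rightarrow> 'm pt) \<Rightarrow> bool" where
  "tfield S X \<longleftrightarrow> C2field X \<and> (\<forall>p\<in>S. X p \<in> tangent_space S p)"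

definition pi1 :: "'m::finite pt \<Rightarrow> 'm pt \<Rightarrow> 'm pt \<Rightarrow> 'm pt \<Rightarrow> real" where
  "pi1 x y z u = gN y z * gN x u - gN x z * gN y u"

definition Kcurv :: "'m::finite pt set \<Rightarrow> ('m pt \<Rightarrow> 'm pt) \<Rightarrow> ('m pt \<Rightarrow> 'm pt) \<Rightarrow> 'm pt \<Rightarrow> real" where
  "Kcurv S X Y p = gN (curv S X Y Y p) (X p) / pi1 (X p) (Y p) (Y p) (X p)"

definition Ktcurv :: "'m::finite pt set \<Rightarrow> ('m pt \<Rightarrow> 'm pt) \<Rightarrow> ('m pt \<Rightarrow> 'm pt) \<Rightarrow> 'm pt \<Rightarrow> real" where
  "Ktcurv S X Y p = gN (curv S X Y Y p) (Jop (X p)) / pi1 (X p) (Y p) (Y p) (X p)"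

definition nondeg_plane :: "'m::finite pt \<Rightarrow> 'm pt \<Rightarrow> bool" where
  "nondeg_plane x y \<longleftrightarrow> dim (span {x, y}) = 2 \<and>
     (\<forall>u\<in>span {x, y}. (\<forall>w\<in>span {x, y}. gN u w = 0) \<longrightarrow> u = 0)"

definition totally_real :: "'m::finite pt \<Rightarrow> 'm pt \<Rightarrow> bool" where
  "totally_real x y \<longleftrightarrow> span {x, y} \<noteq> span {Jop x, Jop y} \<and>
     (\<forall>u\<in>span {x, y}. \<forall>w\<in>span {Jop x, Jop y}. gN u w = 0)"

definition const_tr_curv :: "'m::finite pt set \<Rightarrow> real \<Rightarrow> real \<Rightarrow> bool" where
  "const_tr_curv S \<nu> \<nu>' \<longleftrightarrow>
     (\<forall>p\<in>S. \<forall>X Y. tfield S X \<and> tfield S Y \<and> nondeg_plane (X p) (Y p) \<and> totally_real (X p) (Y p)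
        \<longrightarrow> Kcurv S X Y p = \<nu> \<and> Ktcurv S X Y p = \<nu>')"

end

theory Submission
  imports Defs
begin

(*
  Identify R^(2n+2) with C^(n+1), letting the imaginary unit act as -J. Then g and
  tilde-g are the real and imaginary parts of a complex bilinear form gC, and the
  h-sphere S(z0; a, b) is the complex quadric gC(Z - z0, Z - z0) = kappa with
  kappa = a + i b. Its tangent space at p is the gC-orthogonal complement of
  N = p - z0, and the tangential projection is w - (gC(w, N) / kappa) N. The Gauss
  formula for the induced connection, together with the symmetry of second
  derivatives, gives the curvature tensor of a "complex round sphere",
    R(X, Y) Z = (gC(Z, Y) X - gC(Z, X) Y) / kappa.
  On a totally real plane gC restricts to g, so K + i tilde-K = 1 / kappa, which
  for the given a, b is nu + i tilde-nu.
*)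

lemma bilinear_gN: "bilinear (gN :: 'm::finite pt \<Rightarrow> 'm pt \<Rightarrow> real)"
  by (auto simp: bilinear_def gN_def algebra_simps intro!: linearI)

interpretation gN: bounded_bilinear "gN :: 'm::finite pt \<Rightarrow> 'm pt \<Rightarrow> real"
  using bilinear_gN bilinear_conv_bounded_bilinear by blast

lemma gN_commute: "gN U W = gN W U"
  by (simp add: gN_def inner_commute)

lemma gN_Jop_left: "gN (Jop U) W = gN U (Jop W)"
  by (simp add: gN_def Jop_def inner_commute)

lemma gN_nondegenerate:
  assumes "\<And>W. gN U W = 0"
  shows "U = 0"
proof -
  have "gN U (fst U, - snd U) = U \<bullet> U"
    by (simp add: gN_def inner_prod_def)
  then show "U = 0"
    using assms by simp
qed

definition gC :: "'m::finite pt \<Rightarrow> 'm pt \<Rightarrow> complex" where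
  "gC U W = Complex (gN U W) (gT U W)"

definition cscale :: "complex \<Rightarrow> 'm::finite pt \<Rightarrow> 'm pt" where
  "cscale w U = Re w *\<^sub>R U - Im w *\<^sub>R Jop U"

lemma bilinear_gC: "bilinear (gC :: 'm::finite pt \<Rightarrow> 'm pt \<Rightarrow> complex)"
  by (simp add: bilinear_def linear_iff gC_def gT_def gN_def Jop_def complex_eq_iff
      algebra_simps)

interpretation gC: bounded_bilinear "gC :: 'm::finite pt \<Rightarrow> 'm pt \<Rightarrow> complex"
  using bilinear_gC bilinear_conv_bounded_bilinear by blast

lemma bilinear_cscale: "bilinear (cscale :: complex \<Rightarrow> 'm::finite pt \<Rightarrow> 'm pt)"
  by (auto simp: bilinear_def cscale_def Jop_def algebra_simps intro!: linearI)

interpretation cscale: bounded_bilinear "cscale :: complex \<Rightarrow> 'm::finite pt \<Rightarrow> 'm pt"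
  using bilinear_cscale bilinear_conv_bounded_bilinear by blast

lemma gC_commute: "gC U W = gC W U"
  by (simp add: gC_def gT_def gN_def Jop_def complex_eq_iff inner_commute)

lemma gC_cscale_left: "gC (cscale w U) W = w * gC U W"
  by (simp add: gC_def gT_def cscale_def Jop_def gN.diff_left gN.scaleR_left complex_eq_iff
      gN_def algebra_simps)

lemma gC_cscale_right: "gC W (cscale w U) = w * gC W U"
  by (metis gC_commute gC_cscale_left)

lemma cscale_one: "cscale 1 U = U"
  by (simp add: cscale_def)

lemma Re_gC: "Re (gC U W) = gN U W"
  by (simp add: gC_def)

lemma Im_gC: "Im (gC U W) = gN U (Jop W)"
  by (simp add: gC_def gT_def gN_Jop_left)

lemma conic_parametrization_identity:
  fixes c z :: complex
  assumes "1 + z\<^sup>2 * k \<noteq> 0" and "c' = 4 * k * c"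
  shows "((1 - z\<^sup>2 * k) / (1 + z\<^sup>2 * k))\<^sup>2 * c + (z / (1 + z\<^sup>2 * k))\<^sup>2 * c' = c"
proof -
  have "(1 - z\<^sup>2 * k)\<^sup>2 * c + z\<^sup>2 * c' = (1 + z\<^sup>2 * k)\<^sup>2 * c"
    unfolding assms(2) by (simp add: algebra_simps power2_eq_square)
  then show ?thesis
    using assms(1) by (simp add: power_divide add_divide_distrib[symmetric])
qed

lemma one_plus_real_square_mult_nonzero:
  fixes k :: complex
  assumes "\<bar>t\<bar> < 1 / (cmod k + 1)"
  shows "1 + (of_real t)\<^sup>2 * k \<noteq> 0"
proof
  define e where "e = 1 / (cmod k + 1)"
  have "e > 0" "e \<le> 1"
    unfolding e_def by (simp_all add: add_nonneg_pos)
  assume "1 + (of_real t)\<^sup>2 * k = 0"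
  then have "(of_real t)\<^sup>2 * k = - 1"
    by (simp add: add_eq_0_iff)
  then have one: "t\<^sup>2 * cmod k = 1"
    by (metis norm_minus_cancel norm_one norm_mult norm_power norm_of_real power2_abs)
  have "t\<^sup>2 < e\<^sup>2"
    using assms power_strict_mono[of "\<bar>t\<bar>" e 2] by (simp add: e_def)
  also have "e\<^sup>2 \<le> e"
    using \<open>e > 0\<close> \<open>e \<le> 1\<close> by (simp add: power2_eq_square mult_left_le)
  finally have "t\<^sup>2 * cmod k \<le> e * cmod k"
    by (simp add: mult_right_mono)
  moreover have "e * cmod k < 1"
    by (simp add: e_def add_nonneg_pos)
  ultimately show False
    using one by simp
qed

text \<open>The curve is the rational parametrization of the conic cut out of the complex plane
  spanned by N and v.\<close>

lemma gC_level_curve: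
  fixes N v :: "'m::finite pt"
  assumes "gC N N \<noteq> 0" and "gC N v = 0"
  obtains \<gamma> e where "e > 0" and "\<gamma> 0 = N" and "\<forall>t\<in>{-e<..<e}. gC (\<gamma> t) (\<gamma> t) = gC N N"
    and "(\<gamma> has_vector_derivative v) (at 0)"
proof -
  define k where "k = gC v v / (4 * gC N N)"
  define L where "L = (\<lambda>z::complex. (1 - z\<^sup>2 * k) / (1 + z\<^sup>2 * k))"
  define M where "M = (\<lambda>z::complex. z / (1 + z\<^sup>2 * k))"
  define \<gamma> where "\<gamma> = (\<lambda>t::real. cscale (L (of_real t)) N + cscale (M (of_real t)) v)"
  define e where "e = 1 / (cmod k + 1)"
  have nonzero_denominator: "1 + (of_real t)\<^sup>2 * k \<noteq> 0" if "t \<in> {-e<..<e}" for t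
    using that by (intro one_plus_real_square_mult_nonzero) (auto simp: e_def)
  have "gC (\<gamma> t) (\<gamma> t) = gC N N" if "t \<in> {-e<..<e}" for t
  proof -
    have "gC (\<gamma> t) (\<gamma> t) = (L t)\<^sup>2 * gC N N + (M t)\<^sup>2 * gC v v"
      unfolding \<gamma>_def using assms(2)
      by (simp add: gC.add_left gC.add_right gC_cscale_left gC_cscale_right gC_commute[of v N]
          power2_eq_square)
    also have "\<dots> = gC N N"
      unfolding L_def M_def
      by (rule conic_parametrization_identity[OF nonzero_denominator[OF that]])
        (use assms(1) in \<open>simp add: k_def\<close>)
    finally show ?thesis .
  qed
  moreover have "(\<gamma> has_vector_derivative v) (at 0)"
  proof -
    have "((\<lambda>t::real. L (of_real t)) has_vector_derivative 0) (at 0)"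
      by (rule has_vector_derivative_real_field) (auto simp: L_def intro!: derivative_eq_intros)
    moreover have "((\<lambda>t::real. M (of_real t)) has_vector_derivative 1) (at 0)"
      by (rule has_vector_derivative_real_field) (auto simp: M_def intro!: derivative_eq_intros)
    ultimately show ?thesis
      unfolding \<gamma>_def
      using has_vector_derivative_add[OF
          bounded_linear.has_vector_derivative[OF cscale.bounded_linear_left, of _ 0 _ N]
          bounded_linear.has_vector_derivative[OF cscale.bounded_linear_left, of _ 1 _ v]]
      by (simp add: cscale.zero_left cscale_one)
  qed
  moreover have "\<gamma> 0 = N"
    by (simp add: \<gamma>_def L_def M_def cscale.zero_left cscale_one)
  moreover have "e > 0"
    by (simp add: e_def add_nonneg_pos)
  ultimately show ?thesis
    using that by blast
qed

lemma has_derivative_tangent_unique: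
  assumes "(F has_derivative D1) (at p within S)" and "(F has_derivative D2) (at p within S)"
    and "v \<in> tangent_space S p"
  shows "D1 v = D2 v"
proof -
  obtain \<gamma> e where "e > 0" and "\<gamma> 0 = p" and \<gamma>_in_S: "\<forall>t\<in>{-e<..<e}. \<gamma> t \<in> S"
    and \<gamma>_velocity: "(\<gamma> has_vector_derivative v) (at 0)"
    using assms(3) unfolding tangent_space_def by blast
  let ?I = "{-e<..<e}"
  have "0 \<in> ?I" "open ?I"
    using \<open>e > 0\<close> by auto
  have \<gamma>_derivative: "(\<gamma> has_derivative (\<lambda>x. x *\<^sub>R v)) (at 0 within ?I)"
    using \<gamma>_velocity by (simp add: has_vector_derivative_def has_derivative_at_withinI)
  have "((\<lambda>t. F (\<gamma> t)) has_vector_derivative D v) (at 0)"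
    if D: "(F has_derivative D) (at p within S)" for D
  proof -
    have "\<gamma> ` ?I \<subseteq> S"
      using \<gamma>_in_S by auto
    then have "(F has_derivative D) (at (\<gamma> 0) within \<gamma> ` ?I)"
      using has_derivative_subset[OF D] \<open>\<gamma> 0 = p\<close> by simp
    from has_derivative_in_compose[OF \<gamma>_derivative this]
    have "((\<lambda>t. F (\<gamma> t)) has_derivative (\<lambda>x. D (x *\<^sub>R v))) (at 0 within ?I)" .
    then show ?thesis
      using at_within_open[OF \<open>0 \<in> ?I\<close> \<open>open ?I\<close>] linear_scale[OF has_derivative_linear[OF D]]
      by (simp add: has_vector_derivative_def)
  qed
  from this[OF assms(1)] this[OF assms(2)] show ?thesis
    by (rule vector_derivative_unique_at)
qed

lemma frechet_derivative_within_tangent: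
  assumes "(F has_derivative D) (at p within S)" and "v \<in> tangent_space S p"
  shows "frechet_derivative F (at p within S) v = D v"
proof -
  have "F differentiable (at p within S)"
    using assms(1) by (auto simp: differentiable_def)
  then show ?thesis
    using has_derivative_tangent_unique[OF _ assms] by (simp add: frechet_derivative_works)
qed

lemma frechet_derivative_within_tangent_at:
  assumes "F differentiable (at p)" and "v \<in> tangent_space S p"
  shows "frechet_derivative F (at p within S) v = frechet_derivative F (at p) v"
  using frechet_derivative_within_tangent[OF has_derivative_at_withinI assms(2)] assms(1)
  by (simp add: frechet_derivative_works)

lemma has_derivative_tangent_const:
  assumes "(F has_derivative D) (at p within S)" and "v \<in> tangent_space S p" and "p \<in> S"
    and "\<And>q. q \<in> S \<Longrightarrow> F q = c"
  shows "D v = 0"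
proof -
  have "(F has_derivative (\<lambda>_. 0)) (at p within S)"
    by (rule has_derivative_transform_within[of "\<lambda>_. c" _ _ _ 1]) (use assms in auto)
  then show ?thesis
    by (rule has_derivative_tangent_unique[OF assms(1) _ assms(2)])
qed

lemma second_difference_mvt:
  fixes f :: "'a::real_normed_vector \<Rightarrow> 'b::real_inner"
  assumes f: "\<And>q. (f has_derivative Df q) (at q)" and "0 < t"
  shows "\<exists>\<xi>\<in>{0<..<t}.
    norm (f (p + t *\<^sub>R u + t *\<^sub>R v) - f (p + t *\<^sub>R u) - f (p + t *\<^sub>R v) + f p - (t * t) *\<^sub>R w)
      \<le> t * norm (Df (p + \<xi> *\<^sub>R u + t *\<^sub>R v) u - Df (p + \<xi> *\<^sub>R u) u - t *\<^sub>R w)"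
proof -
  define \<psi> where "\<psi> = (\<lambda>s. f (p + s *\<^sub>R u + t *\<^sub>R v) - f (p + s *\<^sub>R u) - (s * t) *\<^sub>R w)"
  define \<psi>' where "\<psi>' = (\<lambda>s h. h *\<^sub>R (Df (p + s *\<^sub>R u + t *\<^sub>R v) u - Df (p + s *\<^sub>R u) u - t *\<^sub>R w))"
  have "(\<psi> has_derivative \<psi>' s) (at s)" for s
  proof -
    have "(\<psi> has_derivative (\<lambda>h. Df (p + s *\<^sub>R u + t *\<^sub>R v) (h *\<^sub>R u) - Df (p + s *\<^sub>R u) (h *\<^sub>R u)
        - (h * t) *\<^sub>R w)) (at s)"
      unfolding \<psi>_def
    proof (intro has_derivative_diff has_derivative_compose[OF _ f])
      show "((\<lambda>s. p + s *\<^sub>R u + t *\<^sub>R v) has_derivative (\<lambda>h. h *\<^sub>R u)) (at s)"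
        "((\<lambda>s. p + s *\<^sub>R u) has_derivative (\<lambda>h. h *\<^sub>R u)) (at s)"
        "((\<lambda>s. (s * t) *\<^sub>R w) has_derivative (\<lambda>h. (h * t) *\<^sub>R w)) (at s)"
        by (auto intro!: derivative_eq_intros)
    qed
    moreover have "linear (Df q)" for q
      using f has_derivative_linear by blast
    ultimately show ?thesis
      unfolding \<psi>'_def by (simp add: linear_scale algebra_simps)
  qed
  moreover from this have "continuous_on {0..t} \<psi>"
    by (meson has_derivative_continuous continuous_at_imp_continuous_on)
  ultimately obtain \<xi> where "\<xi> \<in> {0<..<t}" and "norm (\<psi> t - \<psi> 0) \<le> norm (\<psi>' \<xi> (t - 0))"
    using mvt_general[OF \<open>0 < t\<close>] by blast
  moreover have "\<psi> t - \<psi> 0 = f (p + t *\<^sub>R u + t *\<^sub>R v) - f (p + t *\<^sub>R u) - f (p + t *\<^sub>R v) + f p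
      - (t * t) *\<^sub>R w"
    by (simp add: \<psi>_def algebra_simps)
  ultimately show ?thesis
    using \<open>0 < t\<close> by (auto simp: \<psi>'_def)
qed

lemma linearization_error_two_points:
  assumes "linear A"
    and d: "\<And>r. norm (r - p) < d \<Longrightarrow> norm (G r - G p - A (r - p)) \<le> e * norm (r - p)"
    and "norm (r1 - p) < d" and "norm (r2 - p) < d"
  shows "norm (G r1 - G r2 - A (r1 - r2)) \<le> e * (norm (r1 - p) + norm (r2 - p))"
proof -
  have "G r1 - G r2 - A (r1 - r2) = (G r1 - G p - A (r1 - p)) - (G r2 - G p - A (r2 - p))"
    by (simp add: linear_diff[OF assms(1)] algebra_simps)
  then have "norm (G r1 - G r2 - A (r1 - r2))
      \<le> norm (G r1 - G p - A (r1 - p)) + norm (G r2 - G p - A (r2 - p))"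
    by (metis norm_triangle_ineq4)
  also have "\<dots> \<le> e * (norm (r1 - p) + norm (r2 - p))"
    unfolding distrib_left by (intro add_mono d assms(3,4))
  finally show ?thesis .
qed

lemma second_difference_approx:
  fixes f :: "'a::real_normed_vector \<Rightarrow> 'b::real_inner"
  assumes f: "\<And>q. (f has_derivative Df q) (at q)"
    and A: "((\<lambda>r. Df r u) has_derivative A) (at p)" and "\<epsilon> > 0"
  obtains \<delta> where "\<delta> > 0" and "\<And>t. 0 < t \<Longrightarrow> t < \<delta> \<Longrightarrow>
    norm (f (p + t *\<^sub>R u + t *\<^sub>R v) - f (p + t *\<^sub>R u) - f (p + t *\<^sub>R v) + f p - (t * t) *\<^sub>R A v)
      \<le> \<epsilon> * (t * t)"
proof -
  define K where "K = 2 * norm u + norm v + 1"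
  have "K > 0"
    by (simp add: K_def add_nonneg_pos)
  obtain d where "d > 0" and d: "\<And>r. norm (r - p) < d \<Longrightarrow>
      norm (Df r u - Df p u - A (r - p)) \<le> \<epsilon> / K * norm (r - p)"
    using A \<open>\<epsilon> > 0\<close> \<open>K > 0\<close> unfolding has_derivative_at_alt by (meson divide_pos_pos)
  have "linear A"
    using A has_derivative_linear by blast
  have "norm (f (p + t *\<^sub>R u + t *\<^sub>R v) - f (p + t *\<^sub>R u) - f (p + t *\<^sub>R v) + f p - (t * t) *\<^sub>R A v)
      \<le> \<epsilon> * (t * t)" if "0 < t" "t < d / K" for t
  proof -
    obtain \<xi> where "\<xi> \<in> {0<..<t}" and mvt: "norm (f (p + t *\<^sub>R u + t *\<^sub>R v) - f (p + t *\<^sub>R u)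
        - f (p + t *\<^sub>R v) + f p - (t * t) *\<^sub>R A v)
        \<le> t * norm (Df (p + \<xi> *\<^sub>R u + t *\<^sub>R v) u - Df (p + \<xi> *\<^sub>R u) u - t *\<^sub>R A v)"
      using second_difference_mvt[OF f \<open>0 < t\<close>] by blast
    define r1 where "r1 = p + \<xi> *\<^sub>R u + t *\<^sub>R v"
    define r2 where "r2 = p + \<xi> *\<^sub>R u"
    have "t * K < d"
      using that \<open>K > 0\<close> by (simp add: pos_less_divide_eq)
    have "\<xi> * norm u \<le> t * norm u"
      using \<open>\<xi> \<in> {0<..<t}\<close> by (simp add: mult_right_mono)
    then have r1: "norm (r1 - p) \<le> t * (norm u + norm v)"
      using \<open>\<xi> \<in> {0<..<t}\<close> norm_triangle_ineq[of "\<xi> *\<^sub>R u" "t *\<^sub>R v"]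
      by (simp add: r1_def algebra_simps)
    have r2: "norm (r2 - p) \<le> t * norm u"
      using \<open>\<xi> \<in> {0<..<t}\<close> by (simp add: r2_def mult_right_mono)
    have "norm (r1 - p) < d" "norm (r2 - p) < d"
      using r1 r2 \<open>t * K < d\<close> \<open>0 < t\<close> unfolding K_def
      by (smt (verit, best) mult_left_mono norm_ge_zero)+
    have "A (r1 - r2) = t *\<^sub>R A v"
      by (simp add: r1_def r2_def linear_scale[OF \<open>linear A\<close>])
    then have "norm (Df r1 u - Df r2 u - t *\<^sub>R A v) \<le> \<epsilon> / K * (norm (r1 - p) + norm (r2 - p))"
      using linearization_error_two_points[OF \<open>linear A\<close> d \<open>norm (r1 - p) < d\<close> \<open>norm (r2 - p) < d\<close>]
      by simp
    also have "\<dots> \<le> \<epsilon> / K * (t * K)"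
      using r1 r2 \<open>\<epsilon> > 0\<close> \<open>K > 0\<close> \<open>0 < t\<close>
      by (intro mult_left_mono) (simp_all add: K_def algebra_simps)
    also have "\<dots> = \<epsilon> * t"
      using \<open>K > 0\<close> by simp
    finally have "t * norm (Df r1 u - Df r2 u - t *\<^sub>R A v) \<le> t * (\<epsilon> * t)"
      using \<open>0 < t\<close> by (simp add: mult_left_mono)
    then show ?thesis
      using mvt unfolding r1_def r2_def by (simp add: algebra_simps)
  qed
  then show ?thesis
    using that \<open>d > 0\<close> \<open>K > 0\<close> by (meson divide_pos_pos)
qed

lemma second_derivative_symmetric:
  fixes f :: "'a::real_normed_vector \<Rightarrow> 'b::real_inner"
  assumes f: "\<And>q. (f has_derivative Df q) (at q)"
    and Au: "((\<lambda>r. Df r u) has_derivative Au) (at p)"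
    and Av: "((\<lambda>r. Df r v) has_derivative Av) (at p)"
  shows "Au v = Av u"
proof -
  have "norm (Au v - Av u) \<le> 0 + \<epsilon>" if "\<epsilon> > 0" for \<epsilon>
  proof -
    have "\<epsilon> / 2 > 0"
      using \<open>\<epsilon> > 0\<close> by simp
    obtain \<delta>1 where "\<delta>1 > 0" and \<delta>1: "\<And>t. 0 < t \<Longrightarrow> t < \<delta>1 \<Longrightarrow>
        norm (f (p + t *\<^sub>R u + t *\<^sub>R v) - f (p + t *\<^sub>R u) - f (p + t *\<^sub>R v) + f p - (t * t) *\<^sub>R Au v)
          \<le> \<epsilon> / 2 * (t * t)"
      using second_difference_approx[OF f Au \<open>\<epsilon> / 2 > 0\<close>, where v = v] by blast
    obtain \<delta>2 where "\<delta>2 > 0" and \<delta>2: "\<And>t. 0 < t \<Longrightarrow> t < \<delta>2 \<Longrightarrow>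
        norm (f (p + t *\<^sub>R v + t *\<^sub>R u) - f (p + t *\<^sub>R v) - f (p + t *\<^sub>R u) + f p - (t * t) *\<^sub>R Av u)
          \<le> \<epsilon> / 2 * (t * t)"
      using second_difference_approx[OF f Av \<open>\<epsilon> / 2 > 0\<close>, where v = u] by blast
    define t where "t = min \<delta>1 \<delta>2 / 2"
    have t: "0 < t" "t < \<delta>1" "t < \<delta>2"
      using \<open>\<delta>1 > 0\<close> \<open>\<delta>2 > 0\<close> by (auto simp: t_def)
    define \<Delta> where "\<Delta> = f (p + t *\<^sub>R u + t *\<^sub>R v) - f (p + t *\<^sub>R u) - f (p + t *\<^sub>R v) + f p"
    have "f (p + t *\<^sub>R v + t *\<^sub>R u) - f (p + t *\<^sub>R v) - f (p + t *\<^sub>R u) + f p = \<Delta>"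
      by (simp add: \<Delta>_def algebra_simps)
    then have Av_approx: "norm (\<Delta> - (t * t) *\<^sub>R Av u) \<le> \<epsilon> / 2 * (t * t)"
      using \<delta>2[OF t(1,3)] by simp
    have Au_approx: "norm (\<Delta> - (t * t) *\<^sub>R Au v) \<le> \<epsilon> / 2 * (t * t)"
      using \<delta>1[OF t(1,2)] by (simp add: \<Delta>_def)
    have "(t * t) * norm (Au v - Av u) = norm ((\<Delta> - (t * t) *\<^sub>R Av u) - (\<Delta> - (t * t) *\<^sub>R Au v))"
      by (simp add: algebra_simps flip: scaleR_diff_right)
    also have "\<dots> \<le> norm (\<Delta> - (t * t) *\<^sub>R Av u) + norm (\<Delta> - (t * t) *\<^sub>R Au v)"
      by (rule norm_triangle_ineq4)
    also have "\<dots> \<le> (t * t) * \<epsilon>"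
      using Av_approx Au_approx by (simp add: algebra_simps)
    finally show ?thesis
      using t(1) by simp
  qed
  then have "norm (Au v - Av u) \<le> 0"
    by (rule field_le_epsilon)
  then show ?thesis
    by simp
qed

abbreviation fderiv :: "('a::real_normed_vector \<Rightarrow> 'b::real_normed_vector) \<Rightarrow> 'a \<Rightarrow> 'a \<Rightarrow> 'b" where
  "fderiv F r \<equiv> frechet_derivative F (at r)"

lemma C2field_has_derivative: "C2field Z \<Longrightarrow> (Z has_derivative fderiv Z r) (at r)"
  unfolding C2field_def using frechet_derivative_works by blast

lemma C2field_has_second_derivative:
  "C2field Z \<Longrightarrow> ((\<lambda>r. fderiv Z r v) has_derivative fderiv (\<lambda>r. fderiv Z r v) q) (at q)"
  unfolding C2field_def using frechet_derivative_works by blast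

lemma C2field_second_derivative_symmetric:
  "C2field Z \<Longrightarrow> fderiv (\<lambda>r. fderiv Z r u) p v = fderiv (\<lambda>r. fderiv Z r v) p u"
  by (rule second_derivative_symmetric[OF C2field_has_derivative C2field_has_second_derivative
        C2field_has_second_derivative])

lemma linear_sum_Basis: "linear L \<Longrightarrow> L w = (\<Sum>i\<in>Basis. (w \<bullet> i) *\<^sub>R L i)"
  by (subst euclidean_representation[of w, symmetric]) (simp add: linear_sum linear_scale)

lemma C2field_has_derivative_along:
  assumes Z: "C2field Z" and Y: "(Y has_derivative DY) (at p)"
  shows "((\<lambda>q. fderiv Z q (Y q)) has_derivative
           (\<lambda>u. fderiv Z p (DY u) + fderiv (\<lambda>r. fderiv Z r (Y p)) p u)) (at p)"
proof -
  define H where "H i = fderiv (\<lambda>r. fderiv Z r i) p" for i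
  have H: "((\<lambda>r. fderiv Z r i) has_derivative H i) (at p)" for i
    unfolding H_def using C2field_has_second_derivative[OF Z] .
  have expand: "fderiv Z q w = (\<Sum>i\<in>Basis. (w \<bullet> i) *\<^sub>R fderiv Z q i)" for q w
    by (rule linear_sum_Basis[OF has_derivative_linear[OF C2field_has_derivative[OF Z]]])
  have "((\<lambda>r. fderiv Z r (Y p)) has_derivative (\<lambda>u. \<Sum>i\<in>Basis. (Y p \<bullet> i) *\<^sub>R H i u)) (at p)"
    unfolding expand[of _ "Y p"] by (intro has_derivative_sum has_derivative_scaleR_right H)
  then have second: "fderiv (\<lambda>r. fderiv Z r (Y p)) p = (\<lambda>u. \<Sum>i\<in>Basis. (Y p \<bullet> i) *\<^sub>R H i u)"
    by (rule has_derivative_unique[OF C2field_has_second_derivative[OF Z]])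
  have "((\<lambda>q. \<Sum>i\<in>Basis. (Y q \<bullet> i) *\<^sub>R fderiv Z q i) has_derivative
      (\<lambda>u. \<Sum>i\<in>Basis. (Y p \<bullet> i) *\<^sub>R H i u + (DY u \<bullet> i) *\<^sub>R fderiv Z p i)) (at p)"
    by (intro has_derivative_sum has_derivative_scaleR H has_derivative_inner_left Y)
  moreover have "(\<lambda>u. \<Sum>i\<in>Basis. (Y p \<bullet> i) *\<^sub>R H i u + (DY u \<bullet> i) *\<^sub>R fderiv Z p i)
      = (\<lambda>u. fderiv Z p (DY u) + fderiv (\<lambda>r. fderiv Z r (Y p)) p u)"
    unfolding second expand[of p "DY _"] by (simp add: sum.distrib add.commute)
  ultimately show ?thesis
    unfolding expand[of _ "Y _"] by simp
qed

lemma gN_orthogonal_span_pair: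
  assumes "gN u x = 0" and "gN u y = 0" and "w \<in> span {x, y}"
  shows "gN u w = 0"
  using linear_eq_0_on_span[OF bounded_linear.linear[OF gN.bounded_linear_right] _ assms(3)] assms(1,2)
  by blast

lemma dim_span_pair_eq_2:
  fixes x y :: "'a::euclidean_space"
  assumes "dim (span {x, y}) = 2"
  shows "x \<notin> span {y}"
proof
  assume "x \<in> span {y}"
  then have "dim (span {x, y}) = dim {y}"
    using dim_insert[of x "{y}"] by (simp add: dim_span)
  also have "\<dots> \<le> card {y}"
    by (rule dim_le_card) (auto intro: span_base)
  finally show False
    using assms by simp
qed

lemma nondeg_plane_gram_nonzero:
  assumes "nondeg_plane x y"
  shows "gN y y * gN x x - gN x y * gN y x \<noteq> 0"
proof
  assume gram: "gN y y * gN x x - gN x y * gN y x = 0"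
  have orth_0: "u = 0" if "u \<in> span {x, y}" and "gN u x = 0" and "gN u y = 0" for u
    using assms that gN_orthogonal_span_pair unfolding nondeg_plane_def by blast
  have "x \<notin> span {y}" and "y \<notin> span {x}"
    using assms dim_span_pair_eq_2 unfolding nondeg_plane_def by (metis insert_commute)+
  show False
  proof (cases "gN x x = 0")
    case True
    then have "gN x y = 0"
      using gram by (simp add: gN_commute)
    then have "x = 0"
      using orth_0 \<open>gN x x = 0\<close> by (simp add: span_base)
    then show False
      using \<open>x \<notin> span {y}\<close> span_zero by auto
  next
    case False
    define u where "u = gN x y *\<^sub>R x - gN x x *\<^sub>R y"
    have "u = 0"
      using gram by (intro orth_0)
        (auto simp: u_def span_base span_diff span_scale gN.diff_left gN.scaleR_left gN_commute
          gN.diff_right gN.scaleR_right algebra_simps)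
    then have "y = (1 / gN x x) *\<^sub>R (gN x y *\<^sub>R x)"
      using False by (simp add: u_def)
    then have "y = (gN x y / gN x x) *\<^sub>R x"
      by simp
    then show False
      using \<open>y \<notin> span {x}\<close> by (metis span_base span_scale singletonI)
  qed
qed

lemma totally_real_gC_real:
  assumes "totally_real x y" and "u \<in> {x, y}" and "w \<in> {x, y}"
  shows "gC u w = complex_of_real (gN u w)"
proof -
  have "gN u (Jop w) = 0"
    using assms unfolding totally_real_def by (auto intro: span_base)
  then show ?thesis
    by (simp add: complex_eq_iff Re_gC Im_gC)
qed

locale h_sphere =
  fixes Z0 :: "'m::finite pt" and \<kappa> :: complex
  assumes \<kappa>_nonzero: "\<kappa> \<noteq> 0"
begin

abbreviation S :: "'m pt set" where
  "S \<equiv> hsphere Z0 (Re \<kappa>) (Im \<kappa>)"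

lemma mem_S: "p \<in> S \<longleftrightarrow> gC (p - Z0) (p - Z0) = \<kappa>"
  by (auto simp: hsphere_def gC_def complex_eq_iff)

lemma tangent_space_S:
  assumes "p \<in> S"
  shows "tangent_space S p = {v. gC v (p - Z0) = 0}"
proof (intro set_eqI iffI)
  fix v assume "v \<in> tangent_space S p"
  have "((\<lambda>q. q - Z0) has_derivative (\<lambda>u. u)) (at p within S)"
    by (auto intro!: derivative_eq_intros)
  from gC.FDERIV[OF this this]
  have "gC (p - Z0) v + gC v (p - Z0) = 0"
    by (rule has_derivative_tangent_const[OF _ \<open>v \<in> tangent_space S p\<close> assms, where c = \<kappa>])
      (simp add: mem_S)
  then show "v \<in> {v. gC v (p - Z0) = 0}"
    by (simp add: gC_commute[of "p - Z0"])
next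
  fix v assume "v \<in> {v. gC v (p - Z0) = 0}"
  then have "gC (p - Z0) v = 0"
    by (simp add: gC_commute)
  moreover have "gC (p - Z0) (p - Z0) \<noteq> 0"
    using assms \<kappa>_nonzero mem_S by simp
  ultimately obtain \<gamma> e where "e > 0" and "\<gamma> 0 = p - Z0"
    and "\<forall>t\<in>{-e<..<e}. gC (\<gamma> t) (\<gamma> t) = gC (p - Z0) (p - Z0)"
    and "(\<gamma> has_vector_derivative v) (at 0)"
    using gC_level_curve by blast
  moreover have "((\<lambda>t. Z0 + \<gamma> t) has_vector_derivative v) (at 0)"
    using has_vector_derivative_add[OF has_vector_derivative_const \<open>(\<gamma> has_vector_derivative v) (at 0)\<close>]
    by simp
  ultimately show "v \<in> tangent_space S p"
    unfolding tangent_space_def using assms mem_S by (intro CollectI exI[of _ "\<lambda>t. Z0 + \<gamma> t"]) auto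
qed

definition tproj :: "'m pt \<Rightarrow> 'm pt \<Rightarrow> 'm pt" where
  "tproj N w = w - cscale (gC w N / \<kappa>) N"

lemma linear_tproj: "linear (tproj N)"
proof (rule linearI)
  have "(r *\<^sub>R z) / \<kappa> = r *\<^sub>R (z / \<kappa>)" for r and z :: complex
    by (simp add: scaleR_conv_of_real)
  then show "tproj N (r *\<^sub>R w) = r *\<^sub>R tproj N w" for r w
    by (simp add: tproj_def gC.scaleR_left cscale.scaleR_left scaleR_right_diff_distrib)
qed (simp add: tproj_def gC.add_left cscale.add_left add_divide_distrib)

lemma gC_tproj: "gC N N = \<kappa> \<Longrightarrow> gC (tproj N w) N = 0"
  using \<kappa>_nonzero by (simp add: tproj_def gC.diff_left gC_cscale_left)

lemma tproj_tangent: "gC v N = 0 \<Longrightarrow> tproj N v = v"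
  by (simp add: tproj_def cscale.zero_left)

lemma tproj_cscale_normal: "gC N N = \<kappa> \<Longrightarrow> tproj N (cscale c N) = 0"
  using \<kappa>_nonzero by (simp add: tproj_def gC_cscale_left)

lemma tanproj_S:
  assumes "p \<in> S"
  shows "tanproj S p w = tproj (p - Z0) w"
proof -
  let ?N = "p - Z0" and ?T = "tangent_space S p"
  have N: "gC ?N ?N = \<kappa>"
    using assms mem_S by blast
  have tangent: "u \<in> ?T \<longleftrightarrow> gC u ?N = 0" for u
    using tangent_space_S[OF assms] by blast
  have normal_orth: "gN (cscale c ?N) u = 0" if "u \<in> ?T" for c u
    using that by (simp add: tangent Re_gC[symmetric] gC_cscale_left gC_commute[of ?N])
  show ?thesis
    unfolding tanproj_def
  proof (rule the_equality)
    show "tproj ?N w \<in> ?T \<and> (\<forall>u\<in>?T. gN (w - tproj ?N w) u = 0)"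
      using gC_tproj[OF N] normal_orth by (simp add: tangent tproj_def)
  next
    fix t assume t: "t \<in> ?T \<and> (\<forall>u\<in>?T. gN (w - t) u = 0)"
    define d where "d = t - tproj ?N w"
    have "d \<in> ?T"
      using t gC_tproj[OF N] by (simp add: d_def tangent gC.diff_left)
    have "gN d u = 0" if "u \<in> ?T" for u
      using t that normal_orth
      by (simp add: d_def tproj_def gN.diff_left gN.add_left gN.diff_right algebra_simps)
    moreover have "e = tproj ?N e + cscale (gC e ?N / \<kappa>) ?N" for e
      by (simp add: tproj_def)
    ultimately have "gN d e = 0" for e
      using normal_orth[OF \<open>d \<in> ?T\<close>] gC_tproj[OF N]
      by (metis gN.add_right gN_commute tangent add_0)
    then have "d = 0"
      by (rule gN_nondegenerate)
    then show "t = tproj ?N w"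
      by (simp add: d_def)
  qed
qed

lemma tfield_S_tangent: "tfield S Z \<Longrightarrow> q \<in> S \<Longrightarrow> gC (Z q) (q - Z0) = 0"
  unfolding tfield_def using tangent_space_S by blast

lemma tfield_S_derivative_normal:
  assumes Z: "tfield S Z" and "p \<in> S" and "gC v (p - Z0) = 0"
  shows "gC (fderiv Z p v) (p - Z0) = - gC (Z p) v"
proof -
  have "(Z has_derivative fderiv Z p) (at p within S)"
    using Z C2field_has_derivative has_derivative_at_withinI unfolding tfield_def by blast
  moreover have "((\<lambda>q. q - Z0) has_derivative (\<lambda>u. u)) (at p within S)"
    by (auto intro!: derivative_eq_intros)
  ultimately have "((\<lambda>q. gC (Z q) (q - Z0)) has_derivative (\<lambda>u. gC (Z p) u + gC (fderiv Z p u) (p - Z0)))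
      (at p within S)"
    by (rule gC.FDERIV)
  then have "gC (Z p) v + gC (fderiv Z p v) (p - Z0) = 0"
    by (rule has_derivative_tangent_const[where c = 0])
      (use assms tangent_space_S tfield_S_tangent[OF Z] in auto)
  then show ?thesis
    by (simp add: eq_neg_iff_add_eq_0 add.commute)
qed

lemma tfield_frechet_derivative_within:
  assumes "tfield S Y" and "tfield S Z" and "q \<in> S"
  shows "frechet_derivative Z (at q within S) (Y q) = fderiv Z q (Y q)"
  using assms frechet_derivative_within_tangent_at unfolding tfield_def C2field_def by blast

lemma cov_S:
  assumes "tfield S Y" and "tfield S Z" and "q \<in> S"
  shows "cov S Y Z q = tproj (q - Z0) (fderiv Z q (Y q))"
  using assms by (simp add: cov_def tanproj_S tfield_frechet_derivative_within)

lemma lie_S: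
  assumes X: "tfield S X" and Y: "tfield S Y" and "p \<in> S"
  shows "lie S X Y p = fderiv Y p (X p) - fderiv X p (Y p)"
    and "gC (lie S X Y p) (p - Z0) = 0"
proof -
  show lie: "lie S X Y p = fderiv Y p (X p) - fderiv X p (Y p)"
    using assms by (simp add: lie_def tfield_frechet_derivative_within)
  show "gC (lie S X Y p) (p - Z0) = 0"
    unfolding lie
    using tfield_S_derivative_normal[OF Y \<open>p \<in> S\<close> tfield_S_tangent[OF X \<open>p \<in> S\<close>]]
      tfield_S_derivative_normal[OF X \<open>p \<in> S\<close> tfield_S_tangent[OF Y \<open>p \<in> S\<close>]]
    by (simp add: gC.diff_left gC_commute[of "X p"])
qed

lemma cov_cov_S:
  assumes X: "tfield S X" and Y: "tfield S Y" and Z: "tfield S Z" and "p \<in> S"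
  shows "cov S X (cov S Y Z) p
    = tproj (p - Z0) (fderiv Z p (fderiv Y p (X p)) + fderiv (\<lambda>r. fderiv Z r (Y p)) p (X p))
      + cscale (gC (Z p) (Y p) / \<kappa>) (X p)"
proof -
  let ?N = "p - Z0"
  define W where "W q = fderiv Z q (Y q)" for q
  define W' where "W' u = fderiv Z p (fderiv Y p u) + fderiv (\<lambda>r. fderiv Z r (Y p)) p u" for u
  define c where "c q = gC (W q) (q - Z0) / \<kappa>" for q
  have W: "(W has_derivative W') (at p within S)"
    unfolding W_def W'_def using Y Z unfolding tfield_def
    by (blast intro: has_derivative_at_withinI C2field_has_derivative_along C2field_has_derivative)
  have N: "((\<lambda>q. q - Z0) has_derivative (\<lambda>u. u)) (at p within S)"
    by (auto intro!: derivative_eq_intros)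
  obtain dc where c: "(c has_derivative dc) (at p within S)"
    unfolding c_def divide_inverse using has_derivative_mult_left[OF gC.FDERIV[OF W N]] by blast
  have "((\<lambda>q. W q - cscale (c q) (q - Z0)) has_derivative
      (\<lambda>u. W' u - (cscale (c p) u + cscale (dc u) ?N))) (at p within S)"
    by (intro has_derivative_diff W cscale.FDERIV[OF c N, simplified])
  then have "(cov S Y Z has_derivative (\<lambda>u. W' u - (cscale (c p) u + cscale (dc u) ?N)))
      (at p within S)"
    by (rule has_derivative_transform_within[OF _ zero_less_one \<open>p \<in> S\<close>])
      (simp add: cov_S[OF Y Z] tproj_def W_def c_def)
  then have "cov S X (cov S Y Z) p = tproj ?N (W' (X p) - (cscale (c p) (X p) + cscale (dc (X p)) ?N))"
    using X \<open>p \<in> S\<close> unfolding cov_def tfield_def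
    by (simp add: frechet_derivative_within_tangent tanproj_S)
  also have "\<dots> = tproj ?N (W' (X p)) - cscale (c p) (X p)"
    using tfield_S_tangent[OF X \<open>p \<in> S\<close>] \<open>p \<in> S\<close>
    by (simp add: linear_diff[OF linear_tproj] linear_add[OF linear_tproj] tproj_tangent
        tproj_cscale_normal gC_cscale_left mem_S)
  also have "c p = - (gC (Z p) (Y p) / \<kappa>)"
    using tfield_S_derivative_normal[OF Z \<open>p \<in> S\<close> tfield_S_tangent[OF Y \<open>p \<in> S\<close>]]
    by (simp add: c_def W_def)
  finally show ?thesis
    by (simp add: W'_def cscale.minus_left)
qed

lemma cov_lie_S:
  assumes X: "tfield S X" and Y: "tfield S Y" and Z: "tfield S Z" and "p \<in> S"
  shows "cov S (lie S X Y) Z p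
    = tproj (p - Z0) (fderiv Z p (fderiv Y p (X p)) - fderiv Z p (fderiv X p (Y p)))"
proof -
  have "lie S X Y p \<in> tangent_space S p"
    using lie_S(2)[OF X Y \<open>p \<in> S\<close>] tangent_space_S[OF \<open>p \<in> S\<close>] by simp
  moreover have "C2field Z"
    using Z tfield_def by blast
  ultimately have "frechet_derivative Z (at p within S) (lie S X Y p) = fderiv Z p (lie S X Y p)"
    using frechet_derivative_within_tangent_at C2field_def by blast
  then show ?thesis
    unfolding cov_def tanproj_S[OF \<open>p \<in> S\<close>] lie_S(1)[OF X Y \<open>p \<in> S\<close>]
    using linear_diff[OF has_derivative_linear[OF C2field_has_derivative[OF \<open>C2field Z\<close>]]]
    by simp
qed

lemma curv_S:
  assumes X: "tfield S X" and Y: "tfield S Y" and Z: "tfield S Z" and "p \<in> S"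
  shows "curv S X Y Z p = cscale (gC (Z p) (Y p) / \<kappa>) (X p) - cscale (gC (Z p) (X p) / \<kappa>) (Y p)"
proof -
  have "fderiv (\<lambda>r. fderiv Z r (Y p)) p (X p) = fderiv (\<lambda>r. fderiv Z r (X p)) p (Y p)"
    using Z C2field_second_derivative_symmetric unfolding tfield_def by blast
  then show ?thesis
    unfolding curv_def cov_cov_S[OF X Y Z \<open>p \<in> S\<close>] cov_cov_S[OF Y X Z \<open>p \<in> S\<close>]
      cov_lie_S[OF X Y Z \<open>p \<in> S\<close>]
    by (simp add: linear_add[OF linear_tproj] linear_diff[OF linear_tproj])
qed

lemma sectional_curvatures_S:
  assumes "p \<in> S" and X: "tfield S X" and Y: "tfield S Y"
    and "nondeg_plane (X p) (Y p)" and "totally_real (X p) (Y p)"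
  shows "Kcurv S X Y p = Re (inverse \<kappa>)" and "Ktcurv S X Y p = Im (inverse \<kappa>)"
proof -
  let ?x = "X p" and ?y = "Y p"
  define \<pi> where "\<pi> = pi1 ?x ?y ?y ?x"
  have "\<pi> \<noteq> 0"
    using nondeg_plane_gram_nonzero[OF assms(4)] by (simp add: \<pi>_def pi1_def)
  have "gC (curv S X Y Y p) ?x = (gC ?y ?y * gC ?x ?x - gC ?y ?x * gC ?y ?x) / \<kappa>"
    unfolding curv_S[OF X Y Y \<open>p \<in> S\<close>]
    by (simp add: gC.diff_left gC_cscale_left diff_divide_distrib)
  also have "\<dots> = complex_of_real \<pi> * inverse \<kappa>"
    using totally_real_gC_real[OF assms(5)] by (simp add: \<pi>_def pi1_def gN_commute divide_inverse)
  finally have curv_x: "gC (curv S X Y Y p) ?x = complex_of_real \<pi> * inverse \<kappa>" .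
  show "Kcurv S X Y p = Re (inverse \<kappa>)"
    using \<open>\<pi> \<noteq> 0\<close> arg_cong[OF curv_x, of Re]
    by (simp add: Kcurv_def Re_gC \<pi>_def[symmetric])
  show "Ktcurv S X Y p = Im (inverse \<kappa>)"
    using \<open>\<pi> \<noteq> 0\<close> arg_cong[OF curv_x, of Im]
    by (simp add: Ktcurv_def Im_gC \<pi>_def[symmetric])
qed

lemma const_tr_curv_S: "const_tr_curv S (Re (inverse \<kappa>)) (Im (inverse \<kappa>))"
  unfolding const_tr_curv_def using sectional_curvatures_S by blast

end

theorem theorem3p2:
  fixes Z0 :: "(real^'m::finite) \<times> (real^'m)" and \<nu> \<nu>' :: real
  assumes "CARD('m) \<ge> 3"
    and "\<nu>\<^sup>2 + \<nu>'\<^sup>2 > 0"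
  shows "const_tr_curv (hsphere Z0 (\<nu> / (\<nu>\<^sup>2 + \<nu>'\<^sup>2)) (- \<nu>' / (\<nu>\<^sup>2 + \<nu>'\<^sup>2))) \<nu> \<nu>'"
proof -
  define \<kappa> where "\<kappa> = inverse (Complex \<nu> \<nu>')"
  have "Complex \<nu> \<nu>' \<noteq> 0"
    using assms(2) by (auto simp: complex_eq_iff)
  then interpret h_sphere Z0 \<kappa>
    by unfold_locales (simp add: \<kappa>_def)
  have "Re \<kappa> = \<nu> / (\<nu>\<^sup>2 + \<nu>'\<^sup>2)" and "Im \<kappa> = - \<nu>' / (\<nu>\<^sup>2 + \<nu>'\<^sup>2)"
    by (simp_all add: \<kappa>_def)
  moreover have "inverse \<kappa> = Complex \<nu> \<nu>'"
    by (simp add: \<kappa>_def)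
  ultimately show ?thesis
    using const_tr_curv_S by simp
qed

end
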